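(* Let $d \geq 0$ be an integer, $G$ a graph, and $\mathcal{Z}$ a family of $d$-clusters in $G$. Then there exists a family $\mathcal{Z}'$ of pairwise disjoint $(2d)$-clusters in $G$ such that $|\mathcal{Z}'| \leq |\mathcal{Z}|$ and $\bigcup \mathcal{Z} = \bigcup \mathcal{Z}'$.
   Context: For an integer $d\ge 0$, a $d$-cluster in a graph $G$ is a nonempty set $A \subseteq V(G)$ such that $G[A]$ is connected and has diameter at most $d$. *)

theory Defs
  imports Main
begin

definition simple_graph :: "'a set \<Rightarrow> 'a set set \<Rightarrow> bool" where
  "simple_graph V E \<longleftrightarrow> finite V \<and> (\<forall>e\<in>E. \<exists>u v. e = {u, v} \<and> u \<noteq> v \<and> u \<in> V \<and> v \<in> V)"

text \<open>A walk in the induced subgraph G[A]: a nonempty list of vertices of A,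
  consecutive ones adjacent in G. Its length is the number of edges, length - 1.\<close>
definition walk_in :: "'a set set \<Rightarrow> 'a set \<Rightarrow> 'a list \<Rightarrow> bool" where
  "walk_in E A p \<longleftrightarrow> p \<noteq> [] \<and> set p \<subseteq> A \<and>
     (\<forall>i. Suc i < length p \<longrightarrow> {p ! i, p ! Suc i} \<in> E)"

definition dist_le :: "'a set set \<Rightarrow> 'a set \<Rightarrow> 'a \<Rightarrow> 'a \<Rightarrow> nat \<Rightarrow> bool" where
  "dist_le E A x y k \<longleftrightarrow> (\<exists>p. walk_in E A p \<and> hd p = x \<and> last p = y \<and> length p - 1 \<le> k)"

definition cluster :: "'a set \<Rightarrow> 'a set set \<Rightarrow> nat \<Rightarrow> 'a set \<Rightarrow> bool" where
  "cluster V E d A \<longleftrightarrow> A \<noteq> {} \<and> A \<subseteq> V \<and> (\<forall>x\<in>A. \<forall>y\<in>A. dist_le E A x y d)"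

end

theory Submission
  imports Defs "HOL-Library.Product_Lexorder"
begin

text \<open>Pick a centre in every cluster of \<open>Z\<close> and split \<open>U = \<Union>Z\<close> into Voronoi cells
  with respect to the distance of \<open>G[U]\<close>, ties broken by a fixed ranking of the centres.
  Every vertex of \<open>U\<close> lies within distance \<open>d\<close> of the centre of a cluster containing it,
  hence within distance \<open>d\<close> of its own centre. A shortest walk from a centre to a vertex of
  its cell stays inside the cell, because the lexicographic order of (distance, rank) is
  compatible with extending walks. So every cell has radius \<open>d\<close> around its centre and thus
  diameter \<open>2d\<close>; the cells are disjoint, cover \<open>U\<close>, and there are at most \<open>|Z|\<close> of them.\<close>

lemma walk_in_Cons2:
  "walk_in E A (x # y # p) \<longleftrightarrow> x \<in> A \<and> {x, y} \<in> E \<and> walk_in E A (y # p)"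
  by (auto simp: walk_in_def less_Suc_eq_0_disj nth_Cons split: nat.splits)

lemma walk_in_mono: "walk_in E A p \<Longrightarrow> A \<subseteq> B \<Longrightarrow> walk_in E B p"
  by (auto simp: walk_in_def)

lemma walk_in_append:
  "walk_in E A p \<Longrightarrow> walk_in E A q \<Longrightarrow> last p = hd q \<Longrightarrow> walk_in E A (p @ tl q)"
proof (induction p rule: induct_list012)
  case 1
  then show ?case by (simp add: walk_in_def)
next
  case (2 x)
  then show ?case by (cases q) (auto simp: walk_in_def)
next
  case (3 x y zs)
  then show ?case by (simp add: walk_in_Cons2)
qed

lemma walk_in_rev: "walk_in E A p \<Longrightarrow> walk_in E A (rev p)"
proof (induction p rule: induct_list012)
  case (3 x y zs)
  then have "walk_in E A (rev (y # zs))"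
    by (simp add: walk_in_Cons2)
  moreover have "walk_in E A [y, x]"
    using "3.prems" by (auto simp: walk_in_Cons2 walk_in_def insert_commute)
  ultimately have "walk_in E A (rev (y # zs) @ tl [y, x])"
    by (intro walk_in_append) auto
  then show ?case by simp
qed auto

lemma walk_in_take: "walk_in E A p \<Longrightarrow> walk_in E A (take (Suc j) p)"
  by (auto simp: walk_in_def dest: in_set_takeD)

lemma walk_in_drop: "walk_in E A p \<Longrightarrow> j < length p \<Longrightarrow> walk_in E A (drop j p)"
  by (auto simp: walk_in_def dest: in_set_dropD)

lemma dist_le_mono_set: "dist_le E A x y k \<Longrightarrow> A \<subseteq> B \<Longrightarrow> dist_le E B x y k"
  unfolding dist_le_def using walk_in_mono by blast

lemma dist_le_sym: "dist_le E A x y k \<Longrightarrow> dist_le E A y x k"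
  unfolding dist_le_def by (metis walk_in_rev hd_rev last_rev length_rev)

lemma dist_le_trans:
  assumes "dist_le E A x y k" and "dist_le E A y z l"
  shows "dist_le E A x z (k + l)"
proof -
  obtain p q where p: "walk_in E A p" "hd p = x" "last p = y" "length p - 1 \<le> k"
    and q: "walk_in E A q" "hd q = y" "last q = z" "length q - 1 \<le> l"
    using assms unfolding dist_le_def by blast
  have "p \<noteq> []" "q \<noteq> []"
    using p q by (auto simp: walk_in_def)
  moreover have "last (p @ tl q) = z"
    using q \<open>q \<noteq> []\<close> by (cases q) (auto simp: p)
  ultimately show ?thesis
    using p q walk_in_append[of E A p q] unfolding dist_le_def
    by (intro exI[of _ "p @ tl q"]) auto
qed

lemma dist_le_along_walk:
  assumes "walk_in E A p" and "j < length p"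
  shows "dist_le E A (hd p) (p ! j) j" and "dist_le E A (p ! j) (last p) (length p - 1 - j)"
proof -
  have "p \<noteq> []" using assms(1) by (simp add: walk_in_def)
  moreover have "last (take (Suc j) p) = p ! j"
    using assms(2) by (simp add: take_Suc_conv_app_nth)
  ultimately show "dist_le E A (hd p) (p ! j) j"
    using walk_in_take[OF assms(1)] unfolding dist_le_def
    by (intro exI[of _ "take (Suc j) p"]) (simp add: hd_take)
  show "dist_le E A (p ! j) (last p) (length p - 1 - j)"
    using assms walk_in_drop[OF assms] unfolding dist_le_def
    by (intro exI[of _ "drop j p"]) (auto simp: hd_drop_conv_nth)
qed

lemma cluster_if_radius:
  assumes "A \<noteq> {}" "A \<subseteq> V" and "\<forall>u\<in>A. dist_le E A c u r"
  shows "cluster V E (2 * r) A"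
  unfolding cluster_def
proof (intro conjI ballI)
  fix x y assume "x \<in> A" "y \<in> A"
  then have "dist_le E A x y (r + r)"
    using assms(3) by (blast intro: dist_le_trans dist_le_sym)
  then show "dist_le E A x y (2 * r)"
    by (simp add: mult_2)
qed (use assms in auto)

definition walk_dist :: "'a set set \<Rightarrow> 'a set \<Rightarrow> 'a \<Rightarrow> 'a \<Rightarrow> nat" where
  "walk_dist E A x y = (LEAST k. dist_le E A x y k)"

lemma walk_dist_le: "dist_le E A x y k \<Longrightarrow> walk_dist E A x y \<le> k"
  unfolding walk_dist_def by (rule Least_le)

lemma dist_le_walk_dist: "dist_le E A x y k \<Longrightarrow> dist_le E A x y (walk_dist E A x y)"
  unfolding walk_dist_def by (rule LeastI)

definition voronoi_cell :: "'a set set \<Rightarrow> 'a set \<Rightarrow> 'a set \<Rightarrow> ('a \<Rightarrow> nat) \<Rightarrow> 'a \<Rightarrow> 'a set" where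
  "voronoi_cell E U C rank c =
     {u \<in> U. (\<exists>k. dist_le E U c u k) \<and>
            (\<forall>c'\<in>C. (\<exists>k. dist_le E U c' u k) \<longrightarrow>
                     (walk_dist E U c u, rank c) \<le> (walk_dist E U c' u, rank c'))}"

lemma voronoi_cells_disjoint:
  assumes "inj_on rank C" "c \<in> C" "c' \<in> C" "c \<noteq> c'"
  shows "voronoi_cell E U C rank c \<inter> voronoi_cell E U C rank c' = {}"
proof -
  have "rank c \<noteq> rank c'" using assms by (meson inj_onD)
  then show ?thesis
    using assms(2,3) by (fastforce simp: voronoi_cell_def)
qed

lemma voronoi_cells_cover:
  assumes "c \<in> C" and "dist_le E U c u k"
  shows "\<exists>c'\<in>C. u \<in> voronoi_cell E U C rank c'"
proof -
  let ?key = "\<lambda>c. (walk_dist E U c u, rank c)"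
  let ?P = "\<lambda>m. \<exists>c\<in>C. (\<exists>k. dist_le E U c u k) \<and> ?key c = m"
  obtain m where "?P m" and least: "\<forall>m'<m. \<not> ?P m'"
    using assms exists_least_iff[of ?P] by blast
  then obtain c' where c': "c' \<in> C" "\<exists>k. dist_le E U c' u k" "?key c' = m"
    by blast
  have "?key c' \<le> ?key c''" if "c'' \<in> C" "dist_le E U c'' u l" for c'' l
  proof -
    have "\<not> ?key c'' < m" using least that by blast
    then show ?thesis by (simp add: c'(3) not_less)
  qed
  moreover have "u \<in> U"
    using assms(2) by (auto simp: dist_le_def walk_in_def)
  ultimately show ?thesis
    using c' unfolding voronoi_cell_def by blast
qed

text \<open>The key step: a shortest walk from \<open>c\<close> to a vertex \<open>u\<close> of its cell lies in the cell,
  since a centre beating \<open>c\<close> at an intermediate vertex \<open>w\<close> would also beat it at \<open>u\<close>.\<close>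

lemma voronoi_cell_radius:
  assumes u: "u \<in> voronoi_cell E U C rank c"
    and "a \<in> C" and au: "dist_le E U a u r"
  shows "dist_le E (voronoi_cell E U C rank c) c u r"
proof -
  let ?cell = "voronoi_cell E U C rank c"
  let ?L = "walk_dist E U c u"
  have u_best: "(?L, rank c) \<le> (walk_dist E U c' u, rank c')"
    if "c' \<in> C" "dist_le E U c' u k" for c' k
    using u that unfolding voronoi_cell_def by blast
  obtain k where "dist_le E U c u k"
    using u unfolding voronoi_cell_def by blast
  then have "dist_le E U c u ?L"
    by (rule dist_le_walk_dist)
  then obtain p where p: "walk_in E U p" "hd p = c" "last p = u" "length p - 1 \<le> ?L"
    unfolding dist_le_def by blast
  have "p ! j \<in> ?cell" if j: "j < length p" for j
  proof -
    let ?w = "p ! j" and ?m = "length p - 1 - j"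
    have cw: "dist_le E U c ?w j" and wu: "dist_le E U ?w u ?m"
      using dist_le_along_walk[OF p(1) j] p(2,3) by simp_all
    have "(walk_dist E U c ?w, rank c) \<le> (walk_dist E U c' ?w, rank c')"
      if "c' \<in> C" and c'w: "dist_le E U c' ?w k" for c' k
    proof -
      have c'u: "dist_le E U c' u (walk_dist E U c' ?w + ?m)"
        using dist_le_trans[OF dist_le_walk_dist[OF c'w] wu] .
      have "(?L, rank c) \<le> (walk_dist E U c' u, rank c')"
        using u_best[OF \<open>c' \<in> C\<close> c'u] .
      moreover have "walk_dist E U c' u \<le> walk_dist E U c' ?w + ?m"
        using walk_dist_le[OF c'u] .
      moreover have "walk_dist E U c ?w + ?m \<le> ?L"
        using walk_dist_le[OF cw] p(4) j by linarith
      ultimately show ?thesis by auto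
    qed
    moreover have "?w \<in> U"
      using p(1) j by (auto simp: walk_in_def)
    ultimately show ?thesis
      using cw unfolding voronoi_cell_def by blast
  qed
  then have "walk_in E ?cell p"
    using p(1) by (auto simp: walk_in_def in_set_conv_nth)
  moreover have "?L \<le> r"
    using u_best[OF \<open>a \<in> C\<close> au] walk_dist_le[OF au] by auto
  ultimately show ?thesis
    using p unfolding dist_le_def by fastforce
qed

lemma voronoi_cell_cluster:
  assumes "voronoi_cell E U C rank c \<noteq> {}" and "U \<subseteq> V"
    and near: "\<forall>u\<in>U. \<exists>a\<in>C. dist_le E U a u r"
  shows "cluster V E (2 * r) (voronoi_cell E U C rank c)"
proof (rule cluster_if_radius)
  show "voronoi_cell E U C rank c \<subseteq> V"
    using assms(2) by (auto simp: voronoi_cell_def)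
  show "\<forall>u\<in>voronoi_cell E U C rank c. dist_le E (voronoi_cell E U C rank c) c u r"
  proof
    fix u assume u: "u \<in> voronoi_cell E U C rank c"
    then obtain a where "a \<in> C" "dist_le E U a u r"
      using near by (auto simp: voronoi_cell_def)
    with u show "dist_le E (voronoi_cell E U C rank c) c u r"
      by (rule voronoi_cell_radius)
  qed
qed (rule assms(1))

lemma Union_voronoi_cells:
  assumes "\<forall>u\<in>U. \<exists>a\<in>C. dist_le E U a u r"
  shows "\<Union> (voronoi_cell E U C rank ` C) = U"
proof
  show "\<Union> (voronoi_cell E U C rank ` C) \<subseteq> U"
    by (auto simp: voronoi_cell_def)
  show "U \<subseteq> \<Union> (voronoi_cell E U C rank ` C)"
  proof
    fix u assume "u \<in> U"
    then obtain a where "a \<in> C" "dist_le E U a u r"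
      using assms by blast
    then show "u \<in> \<Union> (voronoi_cell E U C rank ` C)"
      using voronoi_cells_cover[of a C E U u r rank] by blast
  qed
qed

lemma voronoi_partition_into_clusters:
  assumes "finite C" and "U \<subseteq> V" and near: "\<forall>u\<in>U. \<exists>a\<in>C. dist_le E U a u r"
  obtains Z' where "\<forall>A\<in>Z'. cluster V E (2 * r) A"
    and "\<forall>A\<in>Z'. \<forall>B\<in>Z'. A \<noteq> B \<longrightarrow> A \<inter> B = {}"
    and "card Z' \<le> card C" and "\<Union> Z' = U"
proof -
  obtain rank :: "'a \<Rightarrow> nat" where rank: "inj_on rank C"
    using finite_imp_inj_to_nat_seg[OF \<open>finite C\<close>] by blast
  let ?Z' = "voronoi_cell E U C rank ` C - {{}}"
  show thesis
  proof
    show "\<forall>A\<in>?Z'. cluster V E (2 * r) A"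
      using voronoi_cell_cluster[OF _ \<open>U \<subseteq> V\<close> near] by blast
    show "\<forall>A\<in>?Z'. \<forall>B\<in>?Z'. A \<noteq> B \<longrightarrow> A \<inter> B = {}"
      using voronoi_cells_disjoint[OF rank] by fastforce
    show "card ?Z' \<le> card C"
      using \<open>finite C\<close> by (meson card_Diff1_le card_image_le finite_imageI le_trans)
    show "\<Union> ?Z' = U"
      using Union_voronoi_cells[OF near] by blast
  qed
qed

theorem lemma3p8:
  fixes V :: "'a set" and E :: "'a set set" and d :: nat and Z :: "'a set set"
  assumes "simple_graph V E"
    and "\<forall>A\<in>Z. cluster V E d A"
  shows "\<exists>Z'. (\<forall>A\<in>Z'. cluster V E (2 * d) A)
             \<and> (\<forall>A\<in>Z'. \<forall>B\<in>Z'. A \<noteq> B \<longrightarrow> A \<inter> B = {})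
             \<and> card Z' \<le> card Z
             \<and> \<Union> Z = \<Union> Z'"
proof -
  have "Z \<subseteq> Pow V" "finite V"
    using assms by (auto simp: simple_graph_def cluster_def)
  then have "finite Z"
    by (meson finite_Pow_iff finite_subset)
  obtain centre where centre: "\<forall>A\<in>Z. centre A \<in> A"
    using assms(2) bchoice[of Z "\<lambda>A c. c \<in> A"] unfolding cluster_def by blast
  have near: "\<forall>u\<in>\<Union> Z. \<exists>a\<in>centre ` Z. dist_le E (\<Union> Z) a u d"
  proof
    fix u assume "u \<in> \<Union> Z"
    then obtain A where A: "A \<in> Z" "u \<in> A" by blast
    have "dist_le E A (centre A) u d"
      using assms(2) centre A unfolding cluster_def by blast
    then have "dist_le E (\<Union> Z) (centre A) u d"
      by (rule dist_le_mono_set) (use A in blast)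
    with A(1) show "\<exists>a\<in>centre ` Z. dist_le E (\<Union> Z) a u d" by blast
  qed
  have "finite (centre ` Z)" "\<Union> Z \<subseteq> V"
    using \<open>finite Z\<close> \<open>Z \<subseteq> Pow V\<close> by auto
  then obtain Z' where "\<forall>A\<in>Z'. cluster V E (2 * d) A"
    and "\<forall>A\<in>Z'. \<forall>B\<in>Z'. A \<noteq> B \<longrightarrow> A \<inter> B = {}"
    and "card Z' \<le> card (centre ` Z)" and "\<Union> Z' = \<Union> Z"
    using near by (rule voronoi_partition_into_clusters)
  moreover have "card (centre ` Z) \<le> card Z"
    using \<open>finite Z\<close> by (rule card_image_le)
  ultimately show ?thesis
    by (intro exI[of _ Z']) auto
qed

end
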